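(* For $n\ge 0$, \begin{align*} (\mathfrak C_2+\mathfrak C_2)^n&=\frac{(2n)!}{30}\sum_{l=0}^{n}\frac{(-1)^{n-l}(10n-8l+5)(2n-2l-3)!!}{2^{n-l}(n-l)!\,(2l)!}\mathfrak C_{2l+4}\\ &\quad-\frac{(2n)!}{3}\sum_{l=0}^{n}\frac{(-1)^{n-l}(6l+1)(2n-2l+1)!!}{2^{n-l}(n-l)!\,(2l)!}\mathfrak C_{2l+2}\\ &\quad-\frac{(2n)!}{30}\sum_{l=0}^{n}\frac{(-1)^{n-l}(160l^3-220l^2+72l-1)(2n-2l+1)!!}{2^{n-l}(n-l)!\,(2l)!}\mathfrak C_{2l}. \end{align*}
   Context: The numbers $\mathfrak C_{2n}$ (Cauchy numbers with level $2$) are defined by $\frac{t}{{\rm arcsinh}\,t}=\sum_{n=0}^\infty\mathfrak C_{2n}\frac{t^{2n}}{(2n)!}$. Convolution notation: $(\mathfrak C_{2j_1}+\cdots+\mathfrak C_{2j_k})^n:=\sum_{i_1+\cdots+i_k=n,\ i_1,\dots,i_k\ge0}\frac{(2n)!}{(2i_1)!\cdots(2i_k)!}\mathfrak C_{2i_1+2j_1}\cdots\mathfrak C_{2i_k+2j_k}$. Double factorials: $(2i-1)!!=(2i-1)(2i-3)\cdots1$ for $i\ge1$, $(-1)!!=1$, and $(-(2i+1))!!=\frac{(-1)^i}{(2i-1)!!}$ for $i\ge1$. *)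

theory Defs
  imports Complex_Main "HOL-Computational_Algebra.Formal_Power_Series"
begin

definition sinh_fps :: "real fps" where
  "sinh_fps = fps_const (1/2) * (fps_exp 1 - fps_exp (-1))"

definition arcsinh_fps :: "real fps" where
  "arcsinh_fps = fps_inv sinh_fps"

text \<open>t / arcsinh t = 1 / (arcsinh t / t); arcsinh t / t is the shift of arcsinh_fps.
  Cauchy numbers with level 2: t / arcsinh t = sum C_{2n} t^{2n} / (2n)!.
  cauchy2 n denotes C_{2n}.\<close>
definition cauchy2 :: "nat \<Rightarrow> real" where
  "cauchy2 n = fact (2*n) * fps_nth (inverse (fps_shift 1 arcsinh_fps)) (2*n)"

text \<open>Double factorial of an odd integer m, with (-1)!! = 1 and
  (-(2i+1))!! = (-1)^i / (2i-1)!! for i \<ge> 1.\<close>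
definition odd_dfact :: "int \<Rightarrow> real" where
  "odd_dfact m =
     (if m \<ge> -1 then (\<Prod>j\<in>{1..nat ((m+1) div 2)}. real (2*j - 1))
      else (let i = nat ((-m-1) div 2) in
              (-1)^i / (\<Prod>j\<in>{1..i}. real (2*j - 1))))"

text \<open>(C_{2j1} + C_{2j2})^n convolution.\<close>
definition cauchy2_conv2 :: "nat \<Rightarrow> nat \<Rightarrow> nat \<Rightarrow> real" where
  "cauchy2_conv2 j1 j2 n =
     (\<Sum>i\<le>n. fact (2*n) / (fact (2*i) * fact (2*(n-i)))
               * cauchy2 (i + j1) * cauchy2 ((n-i) + j2))"

end

theory Submission
  imports Defs
begin

(*
  Write y = arcsinh t, w = y' = (1 + t^2)^(-1/2) and B = t / y = sum C_{2n} t^{2n} / (2n)!.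
  The Euler operator \<theta> = t d/dt maps the ring Q[B, w] into itself, since
  \<theta> B = B - w B^2 and \<theta> w = w^3 - w, and t^k B^(k) is a polynomial in \<theta> applied to B.
  Hence the generating-function identity

    30 (B'')^2 = 5 B'''' \<theta>P + \<theta>(B'''') P + 5 B'''' P
                 - 10 (3 \<theta>B'' + B'') w^3 - (20 \<theta>^3 - 55 \<theta>^2 + 36 \<theta> - 1) B w^3,

  where P = -(1 + t^2)^(1/2), becomes a polynomial identity in B and w after multiplication
  by t^4 w.  All series involved are even, and P and w^3 solve (1 + t^2) \<theta>F = a t^2 F, so
  their coefficients are double-factorial quotients; comparing the coefficients of t^{2n}
  gives the theorem.
*)

unbundle fps_syntax

lemma fps_numeral_mult_nth: "(numeral c * F) $ n = numeral c * (F :: 'a::comm_ring_1 fps) $ n"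
  by (simp add: fps_numeral_fps_const)

lemma fps_XD_nth [simp]: "fps_XD F $ n = of_nat n * F $ n"
  by (cases n) (simp_all add: fps_XD_def)

lemma fps_XD_mult: "fps_XD (F * G) = fps_XD F * G + F * fps_XD (G :: 'a::comm_ring_1 fps)"
  by (simp add: fps_XD_def algebra_simps)

lemma fps_XD_power: "fps_XD (F ^ n) = of_nat n * F ^ (n - 1) * fps_XD (F :: 'a::comm_ring_1 fps)"
  by (simp add: fps_XD_def fps_deriv_power' algebra_simps)

lemma fps_XD_diff: "fps_XD (F - G) = fps_XD F - fps_XD (G :: 'a::comm_ring_1 fps)"
  by (simp add: fps_XD_def algebra_simps)

lemma fps_XD_uminus: "fps_XD (- F) = - fps_XD (F :: 'a::comm_ring_1 fps)"
  by (simp add: fps_XD_def)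

lemma fps_XD_numeral: "fps_XD (numeral k :: 'a::comm_ring_1 fps) = 0"
  by (simp add: fps_XD_def)

lemma fps_XD_fps_X: "fps_XD (fps_X :: 'a::comm_ring_1 fps) = fps_X"
  by (simp add: fps_XD_def)

lemma fps_XD_1: "fps_XD (1 :: 'a::comm_ring_1 fps) = 0"
  by (simp add: fps_XD_def)

lemmas fps_XD_simps = fps_XD_add fps_XD_diff fps_XD_uminus fps_XD_mult fps_XD_power
  fps_XD_numeral fps_XD_1 fps_XD_fps_X

lemma fps_XD_fps_X_power: "fps_XD (fps_X ^ k :: 'a::comm_ring_1 fps) = of_nat k * fps_X ^ k"
  by (rule fps_ext) simp

lemma fps_XD_fps_X_power_mult:
  "fps_XD (fps_X ^ k * F) = of_nat k * (fps_X ^ k * F) + fps_X ^ k * fps_XD (F :: 'a::comm_ring_1 fps)"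
  by (simp add: fps_XD_mult fps_XD_fps_X_power algebra_simps)

lemma fps_X_power_mult_deriv_funpow_Suc:
  fixes F :: "'a::comm_ring_1 fps"
  shows "fps_X ^ Suc k * (fps_deriv ^^ Suc k) F
    = fps_XD (fps_X ^ k * (fps_deriv ^^ k) F) - of_nat k * (fps_X ^ k * (fps_deriv ^^ k) F)"
  using fps_XD_fps_X_power_mult[of k "(fps_deriv ^^ k) F"] by (simp add: fps_XD_def algebra_simps)

lemma fps_deriv_funpow_nth:
  "(fps_deriv ^^ k) F $ m = fact (m + k) / fact m * (F :: 'a::field_char_0 fps) $ (m + k)"
proof (induction k arbitrary: m)
  case (Suc k)
  have "(fps_deriv ^^ Suc k) F $ m = of_nat (m + 1) * (fact (m + 1 + k) / fact (m + 1) * F $ (m + 1 + k))"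
    by (simp add: Suc)
  also have "\<dots> = fact (m + Suc k) / fact m * F $ (m + Suc k)"
    using of_nat_neq_0[of m, where 'a='a] by (simp add: fact_Suc[of m, simplified] del: of_nat_add)
  finally show ?case .
qed simp

lemma fps_mult_nth_even:
  fixes F G :: "'a::comm_semiring_1 fps"
  assumes odd_0: "\<And>k. F $ (2*k+1) = 0"
  shows "(F * G) $ (2*n) = (\<Sum>l\<le>n. F $ (2*l) * G $ (2*(n-l)))"
proof -
  have "F $ i = 0" if "i \<le> 2*n" "i \<notin> (*) 2 ` {..n}" for i
  proof -
    have "odd i" using that by (auto elim!: evenE)
    then show ?thesis by (metis oddE odd_0)
  qed
  then have "(F * G) $ (2*n) = (\<Sum>i\<in>(*) 2 ` {..n}. F $ i * G $ (2*n - i))"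
    unfolding fps_mult_nth by (intro sum.mono_neutral_right) auto
  also have "\<dots> = (\<Sum>l\<le>n. F $ (2*l) * G $ (2*(n-l)))"
    by (subst sum.reindex) (auto simp: inj_on_def right_diff_distrib')
  finally show ?thesis .
qed

lemma fps_inverse_nth_odd_eq_0:
  fixes F :: "'a::field_char_0 fps"
  assumes odd_0: "\<And>k. F $ (2*k+1) = 0" and "F $ 0 \<noteq> 0"
  shows "inverse F $ (2*k+1) = 0"
proof -
  have "F oo - fps_X = F"
  proof (rule fps_ext)
    fix n
    show "(F oo - fps_X) $ n = F $ n"
    proof (cases "even n")
      case False
      then obtain k where "n = 2*k+1" by (rule oddE)
      then show ?thesis using odd_0[of k] by (simp add: fps_compose_uminus')
    qed (simp add: fps_compose_uminus')
  qed
  then have "inverse F oo - fps_X = inverse F"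
    using fps_inverse_compose[of "- fps_X" F] assms(2) by simp
  then have "(-1) ^ (2*k+1) * inverse F $ (2*k+1) = inverse F $ (2*k+1)"
    unfolding fps_compose_uminus' by (metis fps_nth_Abs_fps)
  then show ?thesis by simp
qed

text \<open>(1 + X^2) \<theta>F = a X^2 F is the differential equation of (1 + X^2)^(a/2).\<close>

lemma fps_ode_nth_1:
  fixes F :: "'a::field_char_0 fps"
  assumes "(1 + fps_X^2) * fps_XD F = fps_const a * fps_X^2 * F"
  shows "F $ 1 = 0"
  using arg_cong[OF assms, of "\<lambda>G. G $ 1"]
  by (simp add: distrib_right fps_X_power_mult_nth fps_X_power_mult_right_nth)

lemma fps_ode_nth_Suc_Suc:
  fixes F :: "'a::field_char_0 fps"
  assumes "(1 + fps_X^2) * fps_XD F = fps_const a * fps_X^2 * F"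
  shows "F $ (n+2) = (a - of_nat n) / of_nat (n+2) * F $ n"
proof -
  have "((1 + fps_X^2) * fps_XD F) $ (n+2) = of_nat (n+2) * F $ (n+2) + of_nat n * F $ n"
    by (simp add: distrib_right fps_X_power_mult_nth)
  moreover have "(fps_const a * fps_X^2 * F) $ (n+2) = a * F $ n"
    by (simp add: mult.assoc fps_X_power_mult_nth)
  ultimately have "of_nat (n+2) * F $ (n+2) + of_nat n * F $ n = a * F $ n"
    using assms by metis
  then have "of_nat (n+2) * F $ (n+2) = (a - of_nat n) * F $ n"
    by (simp add: algebra_simps)
  moreover have "(of_nat (n+2) :: 'a) \<noteq> 0"
    using of_nat_neq_0[of "Suc n", where 'a='a] by simp
  ultimately show ?thesis by (simp add: field_simps del: of_nat_add)
qed

lemma fps_ode_nth_odd: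
  fixes F :: "'a::field_char_0 fps"
  assumes ode: "(1 + fps_X^2) * fps_XD F = fps_const a * fps_X^2 * F"
  shows "F $ (2*k+1) = 0"
proof (induction k)
  case (Suc k)
  then show ?case using fps_ode_nth_Suc_Suc[OF ode, of "2*k+1"] by simp
qed (use fps_ode_nth_1[OF ode] in simp)

lemma fps_ode_nth_even_Suc:
  fixes F :: "'a::field_char_0 fps"
  assumes "(1 + fps_X^2) * fps_XD F = fps_const a * fps_X^2 * F"
  shows "F $ (2 * Suc k) = (a - 2 * of_nat k) / (2 * of_nat k + 2) * F $ (2*k)"
  using fps_ode_nth_Suc_Suc[OF assms, of "2*k"] by (simp add: add.commute)

lemma odd_dfact_nonneg: "odd_dfact (2 * int k - 1) = (\<Prod>j=1..k. real (2*j - 1))"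
  by (simp add: odd_dfact_def)

lemma odd_dfact_neg: "odd_dfact (- (2 * int i + 1)) = (-1)^i / (\<Prod>j=1..i. real (2*j - 1))"
  by (cases i) (simp_all add: odd_dfact_def Let_def nat_add_distrib)

lemma odd_dfact_add_2:
  assumes "odd m"
  shows "odd_dfact (m + 2) = of_int (m + 2) * odd_dfact m"
proof -
  obtain b where m: "m = 2 * b + 1" using assms by (rule oddE)
  show ?thesis
  proof (cases "b \<ge> -1")
    case True
    define k where "k = nat (b + 1)"
    have "m = 2 * int k - 1" "m + 2 = 2 * int (Suc k) - 1" using True m by (simp_all add: k_def)
    then show ?thesis by (simp only: odd_dfact_nonneg) (simp add: prod.cl_ivl_Suc of_nat_diff)
  next
    case False
    define i where "i = nat (- b - 2)"
    have m_i: "m = - (2 * int (Suc i) + 1)" "m + 2 = - (2 * int i + 1)"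
      using False m by (simp_all add: i_def)
    define P where "P = (\<Prod>j=1..i. real (2*j - 1))"
    have P_Suc: "(\<Prod>j=1..Suc i. real (2*j - 1)) = P * (2 * real i + 1)"
      by (simp add: P_def prod.cl_ivl_Suc)
    have "P > 0"
      unfolding P_def by (rule prod_pos) auto
    moreover have "2 * real i + 1 > 0" by simp
    ultimately show ?thesis
      unfolding m_i(2) unfolding m_i(1) odd_dfact_neg P_Suc P_def[symmetric]
      by (simp add: divide_simps) (simp add: algebra_simps)
  qed
qed

definition arcsinh_deriv_fps :: "real fps" where
  "arcsinh_deriv_fps = fps_deriv arcsinh_fps"

lemma sinh_fps_nth_0 [simp]: "sinh_fps $ 0 = 0"
  and sinh_fps_nth_1 [simp]: "sinh_fps $ Suc 0 = 1"
  by (simp_all add: sinh_fps_def)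

lemma arcsinh_fps_nth_0 [simp]: "arcsinh_fps $ 0 = 0"
  and arcsinh_fps_nth_1 [simp]: "arcsinh_fps $ Suc 0 = 1"
  by (simp_all add: arcsinh_fps_def fps_inv_def)

lemma sinh_fps_compose_arcsinh: "sinh_fps oo arcsinh_fps = fps_X"
  unfolding arcsinh_fps_def by (rule fps_inv_right) simp_all

lemma fps_deriv_sinh_fps_sq: "fps_deriv sinh_fps ^ 2 = 1 + sinh_fps ^ 2"
proof -
  define c :: "real fps" where "c = fps_const (1/2)"
  have exp_inverse: "fps_exp (1::real) * fps_exp (-1) = 1"
    by (simp flip: fps_exp_add_mult)
  have c_sq: "c * c * 4 = 1"
    unfolding c_def fps_numeral_fps_const fps_const_mult by simp
  have "fps_deriv sinh_fps = c * (fps_exp 1 + fps_exp (-1))"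
    by (simp add: sinh_fps_def c_def algebra_simps flip: fps_const_neg)
  moreover have "(c * (fps_exp 1 + fps_exp (-1))) ^ 2 - (c * (fps_exp 1 - fps_exp (-1))) ^ 2
      = c * c * 4 * (fps_exp 1 * fps_exp (-1))"
    by algebra
  ultimately show ?thesis
    unfolding sinh_fps_def c_def[symmetric] exp_inverse c_sq by (simp add: algebra_simps)
qed

lemma arcsinh_deriv_fps_sq: "arcsinh_deriv_fps ^ 2 * (1 + fps_X ^ 2) = 1"
proof -
  define C where "C = fps_deriv sinh_fps oo arcsinh_fps"
  have "C * arcsinh_deriv_fps = 1"
    using fps_compose_deriv[of arcsinh_fps sinh_fps]
    by (simp add: C_def arcsinh_deriv_fps_def sinh_fps_compose_arcsinh)
  moreover have "C ^ 2 = 1 + fps_X ^ 2"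
  proof -
    have "C ^ 2 = fps_deriv sinh_fps ^ 2 oo arcsinh_fps"
      by (simp add: C_def fps_compose_power)
    also have "\<dots> = 1 + (sinh_fps oo arcsinh_fps) ^ 2"
      by (simp add: fps_deriv_sinh_fps_sq fps_compose_add_distrib fps_compose_power)
    finally show ?thesis
      by (simp add: sinh_fps_compose_arcsinh)
  qed
  ultimately show ?thesis
    by (metis mult.commute power_mult_distrib power_one)
qed

lemma fps_X_sq_arcsinh_deriv_fps_sq: "fps_X ^ 2 * arcsinh_deriv_fps ^ 2 = 1 - arcsinh_deriv_fps ^ 2"
  using arcsinh_deriv_fps_sq by (simp add: algebra_simps)

lemma fps_XD_arcsinh_deriv_fps:
  "fps_XD arcsinh_deriv_fps = arcsinh_deriv_fps ^ 3 - arcsinh_deriv_fps"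
proof -
  let ?w = arcsinh_deriv_fps
  have "fps_XD (?w ^ 2 * (1 + fps_X ^ 2)) = 0"
    by (simp add: arcsinh_deriv_fps_sq fps_XD_1)
  then have "2 * (?w * fps_XD ?w * (1 + fps_X ^ 2) + fps_X ^ 2 * ?w ^ 2) = 0"
    by (simp add: fps_XD_simps fps_XD_fps_X_power power2_eq_square algebra_simps)
  then have "?w * fps_XD ?w * (1 + fps_X ^ 2) + fps_X ^ 2 * ?w ^ 2 = 0"
    by (metis mult_eq_0_iff zero_neq_numeral)
  then have cross: "?w * fps_XD ?w * (1 + fps_X ^ 2) = - (fps_X ^ 2 * ?w ^ 2)"
    by (simp add: eq_neg_iff_add_eq_0)
  have "fps_XD ?w = fps_XD ?w * (?w ^ 2 * (1 + fps_X ^ 2))"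
    by (simp add: arcsinh_deriv_fps_sq)
  also have "\<dots> = ?w * (?w * fps_XD ?w * (1 + fps_X ^ 2))"
    by algebra
  also have "\<dots> = - ?w * (fps_X ^ 2 * ?w ^ 2)"
    unfolding cross by algebra
  also have "\<dots> = ?w ^ 3 - ?w"
    unfolding fps_X_sq_arcsinh_deriv_fps_sq by algebra
  finally show ?thesis .
qed

lemma arcsinh_deriv_fps_ode:
  "(1 + fps_X ^ 2) * fps_XD arcsinh_deriv_fps = fps_const (-1) * fps_X ^ 2 * arcsinh_deriv_fps"
proof -
  have "(1 + fps_X ^ 2) * fps_XD arcsinh_deriv_fps
      = arcsinh_deriv_fps * (arcsinh_deriv_fps ^ 2 * (1 + fps_X ^ 2)) - (1 + fps_X ^ 2) * arcsinh_deriv_fps"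
    unfolding fps_XD_arcsinh_deriv_fps by algebra
  also have "\<dots> = - (fps_X ^ 2 * arcsinh_deriv_fps)"
    unfolding arcsinh_deriv_fps_sq by algebra
  finally show ?thesis
    by (simp add: fps_const_neg [symmetric])
qed

lemma arcsinh_fps_nth_even: "arcsinh_fps $ (2*k) = 0"
proof (cases k)
  case (Suc p)
  have "arcsinh_deriv_fps $ (2*p+1) = 0"
    by (rule fps_ode_nth_odd[OF arcsinh_deriv_fps_ode])
  then show ?thesis
    using Suc by (simp add: arcsinh_deriv_fps_def del: of_nat_add)
qed simp

definition cauchy2_egf :: "real fps" where
  "cauchy2_egf = inverse (fps_shift 1 arcsinh_fps)"

lemma cauchy2_egf_nth_even: "cauchy2_egf $ (2*n) = cauchy2 n / fact (2*n)"
  by (simp add: cauchy2_def cauchy2_egf_def)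

lemma cauchy2_egf_nth_odd: "cauchy2_egf $ (2*k+1) = 0"
  unfolding cauchy2_egf_def
  by (rule fps_inverse_nth_odd_eq_0) (simp_all add: arcsinh_fps_nth_even[of "Suc _", simplified])

lemma cauchy2_egf_mult_arcsinh_fps: "cauchy2_egf * arcsinh_fps = fps_X"
proof -
  have "arcsinh_fps = fps_shift 1 arcsinh_fps * fps_X"
    by (rule fps_ext) (simp add: fps_X_mult_right_nth)
  moreover have "cauchy2_egf * fps_shift 1 arcsinh_fps = 1"
    unfolding cauchy2_egf_def by (rule inverse_mult_eq_1) simp
  ultimately show ?thesis
    by (metis mult.assoc mult_1)
qed

lemma fps_XD_cauchy2_egf:
  "fps_XD cauchy2_egf = cauchy2_egf - arcsinh_deriv_fps * cauchy2_egf ^ 2"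
proof -
  let ?B = cauchy2_egf and ?y = arcsinh_fps
  have "fps_XD ?y = fps_X * arcsinh_deriv_fps"
    by (simp add: fps_XD_def arcsinh_deriv_fps_def)
  moreover have "fps_XD (?B * ?y) = fps_X"
    by (simp add: cauchy2_egf_mult_arcsinh_fps fps_XD_fps_X)
  ultimately have "fps_XD ?B * ?y + ?B * (fps_X * arcsinh_deriv_fps) = fps_X"
    by (simp add: fps_XD_mult)
  then have "fps_XD ?B * ?y = fps_X - ?B * (fps_X * arcsinh_deriv_fps)"
    by (simp add: eq_diff_eq)
  also have "\<dots> = (?B - arcsinh_deriv_fps * ?B ^ 2) * ?y"
    unfolding cauchy2_egf_mult_arcsinh_fps[symmetric] by algebra
  finally have "fps_XD ?B * ?y = (?B - arcsinh_deriv_fps * ?B ^ 2) * ?y" .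
  moreover have "?y \<noteq> 0"
    by (metis arcsinh_fps_nth_1 fps_zero_nth zero_neq_one)
  ultimately show ?thesis
    by simp
qed

lemma cauchy2_egf_deriv_nth_even:
  "(fps_deriv ^^ (2*j)) cauchy2_egf $ (2*l) = cauchy2 (l+j) / fact (2*l)"
  using cauchy2_egf_nth_even[of "l+j"] by (simp add: fps_deriv_funpow_nth algebra_simps)

lemma cauchy2_egf_deriv_nth_odd: "(fps_deriv ^^ (2*j)) cauchy2_egf $ (2*l+1) = 0"
  using cauchy2_egf_nth_odd[of "l+j"] by (simp add: fps_deriv_funpow_nth algebra_simps)

lemma arcsinh_deriv_fps_nth_0 [simp]: "arcsinh_deriv_fps $ 0 = 1"
  by (simp add: arcsinh_deriv_fps_def)

lemma arcsinh_deriv_fps_cube_ode: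
  "(1 + fps_X ^ 2) * fps_XD (arcsinh_deriv_fps ^ 3) = fps_const (-3) * fps_X ^ 2 * arcsinh_deriv_fps ^ 3"
proof -
  let ?w = arcsinh_deriv_fps
  have "fps_XD (?w ^ 3) = 3 * ?w ^ 2 * (?w ^ 3 - ?w)"
    by (simp add: fps_XD_power fps_XD_arcsinh_deriv_fps)
  then have "(1 + fps_X ^ 2) * fps_XD (?w ^ 3) = 3 * ?w ^ 3 * (?w ^ 2 * (1 + fps_X ^ 2)) - 3 * (1 + fps_X ^ 2) * ?w ^ 3"
    by algebra
  also have "\<dots> = -3 * fps_X ^ 2 * ?w ^ 3"
    unfolding arcsinh_deriv_fps_sq by algebra
  finally show ?thesis
    by (simp add: fps_numeral_fps_const)
qed

text \<open>(1 + X^2) * arcsinh_deriv_fps is the series of sqrt(1 + t^2).\<close>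

lemma fps_XD_neg_sqrt_fps:
  "fps_XD (- ((1 + fps_X ^ 2) * arcsinh_deriv_fps)) = - (fps_X ^ 2 * arcsinh_deriv_fps)"
proof -
  have "fps_XD (- ((1 + fps_X ^ 2) * arcsinh_deriv_fps))
      = - (2 * fps_X ^ 2 * arcsinh_deriv_fps + arcsinh_deriv_fps * (arcsinh_deriv_fps ^ 2 * (1 + fps_X ^ 2))
           - (1 + fps_X ^ 2) * arcsinh_deriv_fps)"
    unfolding fps_XD_uminus fps_XD_mult fps_XD_add fps_XD_1 fps_XD_fps_X_power fps_XD_arcsinh_deriv_fps
      of_nat_numeral
    by algebra
  then show ?thesis
    unfolding arcsinh_deriv_fps_sq by algebra
qed

lemma neg_sqrt_fps_ode:
  "(1 + fps_X ^ 2) * fps_XD (- ((1 + fps_X ^ 2) * arcsinh_deriv_fps))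
    = fps_const 1 * fps_X ^ 2 * - ((1 + fps_X ^ 2) * arcsinh_deriv_fps)"
  unfolding fps_XD_neg_sqrt_fps by (simp add: algebra_simps)

lemma fps_ode_nth_even:
  fixes F :: "'a::field_char_0 fps"
  assumes ode: "(1 + fps_X^2) * fps_XD F = fps_const a * fps_X^2 * F"
    and c_0: "c 0 = F $ 0"
    and c_Suc: "\<And>k. c (Suc k) = (a - 2 * of_nat k) / (2 * of_nat k + 2) * c k"
  shows "F $ (2*k) = c k"
proof (induction k)
  case (Suc k)
  show ?case
    unfolding fps_ode_nth_even_Suc[OF ode] c_Suc Suc.IH ..
qed (simp add: c_0)

lemma arcsinh_deriv_fps_cube_nth_even:
  "(arcsinh_deriv_fps ^ 3) $ (2*k) = (-1)^k * odd_dfact (2 * int k + 1) / (2^k * fact k)"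
proof (rule fps_ode_nth_even[OF arcsinh_deriv_fps_cube_ode])
  fix k
  have odd_dfact_Suc: "odd_dfact (2 * int (Suc k) + 1) = (2 * real k + 3) * odd_dfact (2 * int k + 1)"
    using odd_dfact_add_2[of "2 * int k + 1"] by (simp add: algebra_simps)
  moreover have "2 * real k + 2 > 0" by simp
  ultimately show "(-1) ^ Suc k * odd_dfact (2 * int (Suc k) + 1) / (2 ^ Suc k * fact (Suc k))
    = (- 3 - 2 * of_nat k) / (2 * of_nat k + 2) * ((-1)^k * odd_dfact (2 * int k + 1) / (2^k * fact k))"
    unfolding odd_dfact_Suc by (simp add: field_simps)
qed (simp add: fps_nth_power_0 odd_dfact_def)

lemma neg_sqrt_fps_nth_even:
  "(- ((1 + fps_X ^ 2) * arcsinh_deriv_fps)) $ (2*k) = (-1)^k * odd_dfact (2 * int k - 3) / (2^k * fact k)"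
proof (rule fps_ode_nth_even[OF neg_sqrt_fps_ode])
  fix k
  have odd_dfact_Suc: "odd_dfact (2 * int (Suc k) - 3) = (2 * real k - 1) * odd_dfact (2 * int k - 3)"
    using odd_dfact_add_2[of "2 * int k - 3"] by (simp add: algebra_simps)
  moreover have "2 * real k + 2 > 0" by simp
  ultimately show "(-1) ^ Suc k * odd_dfact (2 * int (Suc k) - 3) / (2 ^ Suc k * fact (Suc k))
    = (1 - 2 * of_nat k) / (2 * of_nat k + 2) * ((-1)^k * odd_dfact (2 * int k - 3) / (2^k * fact k))"
    unfolding odd_dfact_Suc by (simp add: field_simps)
qed (simp add: odd_dfact_def)

lemma fps_X_sq_mult_deriv2_cauchy2_egf:
  "fps_X ^ 2 * (fps_deriv ^^ 2) cauchy2_egf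
    = 2 * arcsinh_deriv_fps ^ 2 * cauchy2_egf ^ 3 - (arcsinh_deriv_fps + arcsinh_deriv_fps ^ 3) * cauchy2_egf ^ 2"
proof -
  have "fps_X ^ 2 * (fps_deriv ^^ 2) cauchy2_egf = fps_XD (fps_XD cauchy2_egf) - fps_XD cauchy2_egf"
    using fps_X_power_mult_deriv_funpow_Suc[of 1 cauchy2_egf]
    by (simp add: numeral_2_eq_2 fps_XD_def)
  also have "\<dots> = 2 * arcsinh_deriv_fps ^ 2 * cauchy2_egf ^ 3 - (arcsinh_deriv_fps + arcsinh_deriv_fps ^ 3) * cauchy2_egf ^ 2"
    by (simp add: fps_XD_simps fps_XD_cauchy2_egf fps_XD_arcsinh_deriv_fps) algebra
  finally show ?thesis .
qed

lemma fps_X_pow4_mult_deriv4_cauchy2_egf: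
  "fps_X ^ 4 * (fps_deriv ^^ 4) cauchy2_egf
    = 24 * arcsinh_deriv_fps ^ 4 * cauchy2_egf ^ 5
      - 12 * (3 * arcsinh_deriv_fps ^ 5 - arcsinh_deriv_fps ^ 3) * cauchy2_egf ^ 4
      + 2 * (15 * arcsinh_deriv_fps ^ 6 - 14 * arcsinh_deriv_fps ^ 4 - arcsinh_deriv_fps ^ 2) * cauchy2_egf ^ 3
      - (15 * arcsinh_deriv_fps ^ 7 - 24 * arcsinh_deriv_fps ^ 5 + 7 * arcsinh_deriv_fps ^ 3
         + 2 * arcsinh_deriv_fps) * cauchy2_egf ^ 2"
proof -
  define G2 where "G2 = fps_X ^ 2 * (fps_deriv ^^ 2) cauchy2_egf"
  have "fps_X ^ 3 * (fps_deriv ^^ 3) cauchy2_egf = fps_XD G2 - 2 * G2"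
    using fps_X_power_mult_deriv_funpow_Suc[of 2 cauchy2_egf] by (simp add: G2_def)
  then have "fps_X ^ 4 * (fps_deriv ^^ 4) cauchy2_egf = fps_XD (fps_XD G2 - 2 * G2) - 3 * (fps_XD G2 - 2 * G2)"
    using fps_X_power_mult_deriv_funpow_Suc[of 3 cauchy2_egf] by simp
  also have "\<dots> = 24 * arcsinh_deriv_fps ^ 4 * cauchy2_egf ^ 5
      - 12 * (3 * arcsinh_deriv_fps ^ 5 - arcsinh_deriv_fps ^ 3) * cauchy2_egf ^ 4
      + 2 * (15 * arcsinh_deriv_fps ^ 6 - 14 * arcsinh_deriv_fps ^ 4 - arcsinh_deriv_fps ^ 2) * cauchy2_egf ^ 3
      - (15 * arcsinh_deriv_fps ^ 7 - 24 * arcsinh_deriv_fps ^ 5 + 7 * arcsinh_deriv_fps ^ 3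
         + 2 * arcsinh_deriv_fps) * cauchy2_egf ^ 2"
    unfolding G2_def fps_X_sq_mult_deriv2_cauchy2_egf
    by (simp add: fps_XD_simps fps_XD_cauchy2_egf fps_XD_arcsinh_deriv_fps) algebra
  finally show ?thesis .
qed

lemma cauchy2_egf_deriv_identity:
  defines "B \<equiv> cauchy2_egf" and "w \<equiv> arcsinh_deriv_fps"
    and "P \<equiv> - ((1 + fps_X ^ 2) * arcsinh_deriv_fps)"
    and "H2 \<equiv> (fps_deriv ^^ 2) cauchy2_egf" and "H4 \<equiv> (fps_deriv ^^ 4) cauchy2_egf"
  shows "30 * H2 ^ 2 = 5 * H4 * fps_XD P + fps_XD H4 * P + 5 * H4 * P
      - 10 * ((3 * fps_XD H2 + H2) * w ^ 3)
      - (20 * (fps_XD ^^ 3) B - 55 * (fps_XD ^^ 2) B + 36 * fps_XD B - B) * w ^ 3"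
    (is "?L = ?R")
proof -
  define M where "M = 20 * (fps_XD ^^ 3) B - 55 * (fps_XD ^^ 2) B + 36 * fps_XD B - B"
  note XD_B = fps_XD_cauchy2_egf[folded B_def w_def]
  note XD_w = fps_XD_arcsinh_deriv_fps[folded w_def]
  note X2_H2 = fps_X_sq_mult_deriv2_cauchy2_egf[folded B_def w_def H2_def]
  note X4_H4 = fps_X_pow4_mult_deriv4_cauchy2_egf[folded B_def w_def H4_def]
  have X4_XD_H4: "fps_X ^ 4 * fps_XD H4 = fps_XD (fps_X ^ 4 * H4) - 4 * (fps_X ^ 4 * H4)"
    using fps_XD_fps_X_power_mult[of 4 H4] by simp
  have X2_XD_H2: "fps_X ^ 2 * fps_XD H2 = fps_XD (fps_X ^ 2 * H2) - 2 * (fps_X ^ 2 * H2)"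
    using fps_XD_fps_X_power_mult[of 2 H2] by simp
  have X2_w2: "fps_X ^ 2 * w ^ 2 = 1 - w ^ 2"
    unfolding w_def by (rule fps_X_sq_arcsinh_deriv_fps_sq)
  have P_w: "P * w = -1"
    using arcsinh_deriv_fps_sq unfolding P_def w_def by algebra
  have XD_P_w: "fps_XD P * w = w ^ 2 - 1"
    using X2_w2 unfolding P_def fps_XD_neg_sqrt_fps unfolding w_def[symmetric] by algebra
  txt \<open>Multiplied by X^4 w, both sides become polynomials in B and w: X^k times the k-th
    derivative is a polynomial in \<theta> applied to B, and X^2 w^2 = 1 - w^2 removes X.\<close>
  have "fps_X ^ 4 * w * ?R = 5 * (fps_X ^ 4 * H4) * (fps_XD P * w) + (fps_X ^ 4 * fps_XD H4) * (P * w)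
      + 5 * (fps_X ^ 4 * H4) * (P * w)
      - 10 * (fps_X ^ 2 * w ^ 2) * w ^ 2 * (3 * (fps_X ^ 2 * fps_XD H2) + fps_X ^ 2 * H2)
      - (fps_X ^ 2 * w ^ 2) ^ 2 * M"
    unfolding M_def by algebra
  also have "\<dots> = 30 * w * (fps_X ^ 2 * H2) ^ 2"
    unfolding X4_XD_H4 X2_XD_H2 X2_w2 P_w XD_P_w X4_H4 X2_H2 M_def
    by (simp add: fps_XD_simps XD_B XD_w numeral_3_eq_3 numeral_2_eq_2) algebra
  also have "\<dots> = fps_X ^ 4 * w * ?L"
    by algebra
  finally have "fps_X ^ 4 * w * ?L = fps_X ^ 4 * w * ?R" ..
  moreover have "w \<noteq> 0"
    by (metis arcsinh_deriv_fps_nth_0 fps_zero_nth zero_neq_one w_def)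
  ultimately show ?thesis by simp
qed

lemma cauchy2_conv2_1_1_eq_nth:
  "cauchy2_conv2 1 1 n = fact (2*n) * (((fps_deriv ^^ 2) cauchy2_egf) ^ 2) $ (2*n)"
proof -
  have "(fps_deriv ^^ 2) cauchy2_egf $ (2*l+1) = 0" for l
    using cauchy2_egf_deriv_nth_odd[of 1] by simp
  then have "(((fps_deriv ^^ 2) cauchy2_egf) ^ 2) $ (2*n)
      = (\<Sum>l\<le>n. cauchy2 (l+1) / fact (2*l) * (cauchy2 (n-l+1) / fact (2*(n-l))))"
    unfolding power2_eq_square
    using cauchy2_egf_deriv_nth_even[of 1] by (simp add: fps_mult_nth_even)
  then show ?thesis
    by (simp add: cauchy2_conv2_def sum_distrib_left mult.assoc)
qed

lemma cauchy2_egf_deriv4_neg_sqrt_terms_nth: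
  defines "H4 \<equiv> (fps_deriv ^^ 4) cauchy2_egf"
    and "P \<equiv> - ((1 + fps_X ^ 2) * arcsinh_deriv_fps)"
  shows "(5 * H4 * fps_XD P + fps_XD H4 * P + 5 * H4 * P) $ (2*n) =
    (\<Sum>l\<le>n. (-1)^(n-l) * (10*real n - 8*real l + 5)
      * odd_dfact (2*int n - 2*int l - 3) / (2^(n-l) * fact (n-l) * fact (2*l)) * cauchy2 (l+2))"
proof -
  have H4_odd: "H4 $ (2*l+1) = 0" for l
    using cauchy2_egf_deriv_nth_odd[of 2] by (simp add: H4_def)
  have H4_even: "H4 $ (2*l) = cauchy2 (l+2) / fact (2*l)" for l
    using cauchy2_egf_deriv_nth_even[of 2] by (simp add: H4_def)
  have "5 * H4 * fps_XD P + fps_XD H4 * P + 5 * H4 * P = H4 * (5 * fps_XD P + 5 * P) + fps_XD H4 * P"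
    by algebra
  also have "\<dots> $ (2*n) = (\<Sum>l\<le>n. H4 $ (2*l) * (5 * fps_XD P + 5 * P) $ (2*(n-l))
      + fps_XD H4 $ (2*l) * P $ (2*(n-l)))"
    using H4_odd by (simp add: fps_mult_nth_even sum.distrib)
  also have "\<dots> = (\<Sum>l\<le>n. (-1)^(n-l) * (10*real n - 8*real l + 5)
      * odd_dfact (2*int n - 2*int l - 3) / (2^(n-l) * fact (n-l) * fact (2*l)) * cauchy2 (l+2))"
  proof (rule sum.cong[OF refl])
    fix l assume "l \<in> {..n}"
    then obtain k where n: "n = l + k" using le_Suc_ex by auto
    show "H4 $ (2*l) * (5 * fps_XD P + 5 * P) $ (2*(n-l)) + fps_XD H4 $ (2*l) * P $ (2*(n-l))
      = (-1)^(n-l) * (10*real n - 8*real l + 5)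
      * odd_dfact (2*int n - 2*int l - 3) / (2^(n-l) * fact (n-l) * fact (2*l)) * cauchy2 (l+2)"
      unfolding n
      by (simp add: H4_even neg_sqrt_fps_nth_even[of k, folded P_def] fps_numeral_mult_nth)
        (simp add: field_simps)
  qed
  finally show ?thesis .
qed

lemma cauchy2_egf_deriv2_cube_terms_nth:
  defines "H2 \<equiv> (fps_deriv ^^ 2) cauchy2_egf"
  shows "((3 * fps_XD H2 + H2) * arcsinh_deriv_fps ^ 3) $ (2*n) =
    (\<Sum>l\<le>n. (-1)^(n-l) * (6*real l + 1)
      * odd_dfact (2*int n - 2*int l + 1) / (2^(n-l) * fact (n-l) * fact (2*l)) * cauchy2 (l+1))"
proof -
  have coeff: "(3 * fps_XD H2 + H2) $ m = (3 * of_nat m + 1) * H2 $ m" for m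
    by (simp add: fps_numeral_mult_nth) (simp add: algebra_simps)
  have H2_odd: "H2 $ (2*l+1) = 0" for l
    using cauchy2_egf_deriv_nth_odd[of 1] by (simp add: H2_def)
  have "((3 * fps_XD H2 + H2) * arcsinh_deriv_fps ^ 3) $ (2*n)
      = (\<Sum>l\<le>n. (3 * fps_XD H2 + H2) $ (2*l) * (arcsinh_deriv_fps ^ 3) $ (2*(n-l)))"
    by (intro fps_mult_nth_even) (simp only: coeff H2_odd mult_zero_right)
  also have "\<dots> = (\<Sum>l\<le>n. (-1)^(n-l) * (6*real l + 1)
      * odd_dfact (2*int n - 2*int l + 1) / (2^(n-l) * fact (n-l) * fact (2*l)) * cauchy2 (l+1))"
  proof (rule sum.cong[OF refl])
    fix l assume "l \<in> {..n}"
    then obtain k where n: "n = l + k" using le_Suc_ex by auto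
    have "H2 $ (2*l) = cauchy2 (l+1) / fact (2*l)"
      using cauchy2_egf_deriv_nth_even[of 1] by (simp add: H2_def)
    then show "(3 * fps_XD H2 + H2) $ (2*l) * (arcsinh_deriv_fps ^ 3) $ (2*(n-l))
      = (-1)^(n-l) * (6*real l + 1)
      * odd_dfact (2*int n - 2*int l + 1) / (2^(n-l) * fact (n-l) * fact (2*l)) * cauchy2 (l+1)"
      unfolding n coeff by (simp add: arcsinh_deriv_fps_cube_nth_even) (simp add: field_simps)
  qed
  finally show ?thesis .
qed

lemma cauchy2_egf_XD_poly_cube_terms_nth:
  defines "B \<equiv> cauchy2_egf"
  shows "((20 * (fps_XD ^^ 3) B - 55 * (fps_XD ^^ 2) B + 36 * fps_XD B - B) * arcsinh_deriv_fps ^ 3) $ (2*n) =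
    (\<Sum>l\<le>n. (-1)^(n-l) * (160*real l^3 - 220*real l^2 + 72*real l - 1)
      * odd_dfact (2*int n - 2*int l + 1) / (2^(n-l) * fact (n-l) * fact (2*l)) * cauchy2 l)"
proof -
  have coeff: "(20 * (fps_XD ^^ 3) B - 55 * (fps_XD ^^ 2) B + 36 * fps_XD B - B) $ m
      = (20 * of_nat m ^ 3 - 55 * of_nat m ^ 2 + 36 * of_nat m - 1) * B $ m" for m
    by (simp add: fps_numeral_mult_nth fps_mult_fps_XD_shift) (simp add: algebra_simps)
  have B_odd: "B $ (2*l+1) = 0" for l
    unfolding B_def by (rule cauchy2_egf_nth_odd)
  have "((20 * (fps_XD ^^ 3) B - 55 * (fps_XD ^^ 2) B + 36 * fps_XD B - B) * arcsinh_deriv_fps ^ 3) $ (2*n)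
      = (\<Sum>l\<le>n. (20 * (fps_XD ^^ 3) B - 55 * (fps_XD ^^ 2) B + 36 * fps_XD B - B) $ (2*l)
          * (arcsinh_deriv_fps ^ 3) $ (2*(n-l)))"
    by (intro fps_mult_nth_even) (simp only: coeff B_odd mult_zero_right)
  also have "\<dots> = (\<Sum>l\<le>n. (-1)^(n-l) * (160*real l^3 - 220*real l^2 + 72*real l - 1)
      * odd_dfact (2*int n - 2*int l + 1) / (2^(n-l) * fact (n-l) * fact (2*l)) * cauchy2 l)"
  proof (rule sum.cong[OF refl])
    fix l assume "l \<in> {..n}"
    then obtain k where n: "n = l + k" using le_Suc_ex by auto
    show "(20 * (fps_XD ^^ 3) B - 55 * (fps_XD ^^ 2) B + 36 * fps_XD B - B) $ (2*l)
          * (arcsinh_deriv_fps ^ 3) $ (2*(n-l))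
      = (-1)^(n-l) * (160*real l^3 - 220*real l^2 + 72*real l - 1)
      * odd_dfact (2*int n - 2*int l + 1) / (2^(n-l) * fact (n-l) * fact (2*l)) * cauchy2 l"
      unfolding n coeff unfolding B_def
      by (simp add: cauchy2_egf_nth_even arcsinh_deriv_fps_cube_nth_even) (simp add: field_simps)
  qed
  finally show ?thesis .
qed

theorem theorem4:
  fixes n :: nat
  shows "cauchy2_conv2 1 1 n =
     fact (2*n) / 30 * (\<Sum>l\<le>n. (-1)^(n-l) * (10*real n - 8*real l + 5)
        * odd_dfact (2*int n - 2*int l - 3) / (2^(n-l) * fact (n-l) * fact (2*l)) * cauchy2 (l+2))
   - fact (2*n) / 3 * (\<Sum>l\<le>n. (-1)^(n-l) * (6*real l + 1)
        * odd_dfact (2*int n - 2*int l + 1) / (2^(n-l) * fact (n-l) * fact (2*l)) * cauchy2 (l+1))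
   - fact (2*n) / 30 * (\<Sum>l\<le>n. (-1)^(n-l)
        * (160*real l^3 - 220*real l^2 + 72*real l - 1)
        * odd_dfact (2*int n - 2*int l + 1) / (2^(n-l) * fact (n-l) * fact (2*l)) * cauchy2 l)"
    (is "_ = fact (2*n) / 30 * ?S1 - fact (2*n) / 3 * ?S2 - fact (2*n) / 30 * ?S3")
proof -
  have "30 * (((fps_deriv ^^ 2) cauchy2_egf) ^ 2) $ (2*n) = ?S1 - 10 * ?S2 - ?S3"
    unfolding fps_numeral_mult_nth[symmetric] cauchy2_egf_deriv_identity fps_sub_nth fps_numeral_mult_nth
      cauchy2_egf_deriv4_neg_sqrt_terms_nth cauchy2_egf_deriv2_cube_terms_nth
      cauchy2_egf_XD_poly_cube_terms_nth ..
  moreover have "N * L = N / 30 * a - N / 3 * b - N / 30 * c"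
    if "30 * L = a - 10 * b - c" for N L a b c :: real
  proof -
    have "a = 30 * L + 10 * b + c" using that by simp
    then show ?thesis by (simp add: field_simps)
  qed
  ultimately show ?thesis
    unfolding cauchy2_conv2_1_1_eq_nth by blast
qed

end
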